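(* Let $N$ denote a positive integer and, for each positive integer $n$, let $\mathscr E_n=\operatorname{span}_{\mathbb C}\{z^n n^q\mathcal H_{\alpha}(n): z,q\in\mathbb C,\ \alpha\text{ a word}\}$ and $\mathscr H_N=\operatorname{span}_{\mathbb C}\{\mathcal H_{\alpha}(N):\alpha\text{ a word}\}$. Suppose $F_1(n),\ldots,F_m(n)\in\mathscr E_n$, i.e. \[ F_j(n)=\sum_{\ell=1}^{M_j}c_{j,\ell}\,z_{j,\ell}^{\,n}\,n^{q_{j,\ell}}\,\mathcal H_{\alpha_{j,\ell}}(n) \] with $c_{j,\ell},z_{j,\ell},q_{j,\ell}\in\mathbb C$ and words $\alpha_{j,\ell}$. Then for every $e_1,\ldots,e_m\in\mathbb Z_{\ge0}$, the finite sum \[ S(N)=\sum_{n=1}^{N}\prod_{j=1}^{m}F_j(n)^{e_j} \] belongs to $\mathscr H_N$, i.e. it is a finite $\mathbb C$-linear combination of the numbers $\mathcal H_\beta(N)$ for words $\beta$.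
   Context: A letter is a pair $(r,s)\in\mathbb C^2$ and a word is a finite sequence of letters. For a word $\alpha=((r_1,s_1),\ldots,(r_d,s_d))$ and a positive integer $N$, \[ \mathcal H_{\alpha}(N)=\sum_{N\ge n_1>\cdots>n_d\ge1}\prod_{i=1}^{d}\frac{s_i^{n_i}}{n_i^{r_i}},\qquad \mathcal H_\emptyset(N)=1. \] Powers of positive integers are defined by $n^r=\exp(r\log n)$ with the real logarithm. *)

theory Defs
  imports "HOL-Analysis.Analysis"
begin

type_synonym word = "(complex \<times> complex) list"

definition idx :: "nat \<Rightarrow> nat \<Rightarrow> nat list set" where
  "idx d N = {ns. length ns = d \<and> sorted_wrt (>) ns \<and> set ns \<subseteq> {1..N}}"

text \<open>Multiple harmonic sum H_alpha(N) = sum over N >= n_1 > ... > n_d >= 1 of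
  prod_i s_i^(n_i) / n_i^(r_i), with n^r = exp(r ln n) (complex powr of a positive real).\<close>
definition mhs :: "word \<Rightarrow> nat \<Rightarrow> complex" where
  "mhs \<alpha> N = sum (\<lambda>ns :: nat list.
      \<Prod>i<length \<alpha>. snd (\<alpha> ! i) ^ (ns ! i) / (of_nat (ns ! i) :: complex) powr (fst (\<alpha> ! i)))
    (idx (length \<alpha>) N)"

end

theory Submission
  imports Defs
begin

(* Let H be the complex span of the functions N \<mapsto> H_alpha(N). Since
   H_{(r,s) alpha}(N) = sum_{n<=N} s^n/n^r H_alpha(n-1), the space H is closed under
   h \<mapsto> sum_{n<=N} s^n/n^r h(n-1); since splitting off the first letter gives
   H_{(r',s') gamma}(n) = H_{(r',s') gamma}(n-1) + s'^n/n^r' H_gamma(n-1), also under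
   h \<mapsto> sum_{n<=N} s^n/n^r h(n). Telescoping the product H_{a alpha} H_{b beta} along
   the same recursion gives the quasi-shuffle identity, so H is closed under products.
   Hence the summands z^n n^q h(n) with h in H form an algebra (letter terms multiply
   letterwise), and their partial sums lie in H. *)

definition letter_term :: "complex \<times> complex \<Rightarrow> nat \<Rightarrow> complex" where
  "letter_term a n = snd a ^ n / of_nat n powr fst a"

lemma letter_term_mult:
  "letter_term a n * letter_term b n = letter_term (fst a + fst b, snd a * snd b) n"
  by (simp add: letter_term_def powr_add power_mult_distrib)

lemma finite_idx: "finite (idx d N)"
proof -
  have "idx d N \<subseteq> {ns. set ns \<subseteq> {1..N} \<and> length ns = d}"
    unfolding idx_def by auto
  then show ?thesis
    using finite_lists_length_eq[of "{1..N}" d] finite_subset by blast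
qed

lemma idx_0: "idx 0 N = {[]}"
  unfolding idx_def by auto

lemma idx_Suc_0: "idx (Suc d) 0 = {}"
  unfolding idx_def by (auto simp: length_Suc_conv)

lemma idx_Suc_Suc:
  "idx (Suc d) (Suc N) = idx (Suc d) N \<union> (Cons (Suc N)) ` idx d N"
proof (intro set_eqI iffI)
  fix ns assume ns: "ns \<in> idx (Suc d) (Suc N)"
  then obtain x xs where "ns = x # xs"
    unfolding idx_def by (auto simp: length_Suc_conv)
  with ns show "ns \<in> idx (Suc d) N \<union> (Cons (Suc N)) ` idx d N"
    unfolding idx_def by (cases "x = Suc N") fastforce+
qed (fastforce simp: idx_def)

lemma mhs_Nil: "mhs [] = (\<lambda>N. 1)"
  unfolding mhs_def by (simp add: idx_0)

lemma mhs_Cons_0: "mhs (a # \<alpha>) 0 = 0"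
  unfolding mhs_def by (simp add: idx_Suc_0)

lemma mhs_eq_sum_prod_letter_term:
  "mhs \<alpha> N = (\<Sum>ns\<in>idx (length \<alpha>) N. \<Prod>i<length \<alpha>. letter_term (\<alpha> ! i) (ns ! i))"
  unfolding mhs_def letter_term_def ..

lemma mhs_Cons_Suc:
  "mhs (a # \<alpha>) (Suc N) = mhs (a # \<alpha>) N + letter_term a (Suc N) * mhs \<alpha> N"
proof -
  define f where "f ns = (\<Prod>i<length (a # \<alpha>). letter_term ((a # \<alpha>) ! i) (ns ! i))" for ns
  have f_Cons: "f (Suc N # ns) = letter_term a (Suc N) * (\<Prod>i<length \<alpha>. letter_term (\<alpha> ! i) (ns ! i))"
    for ns unfolding f_def by (simp only: length_Cons prod.lessThan_Suc_shift nth_Cons_0 nth_Cons_Suc)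
  have "idx (Suc (length \<alpha>)) N \<inter> (Cons (Suc N)) ` idx (length \<alpha>) N = {}"
    unfolding idx_def by auto
  then have "mhs (a # \<alpha>) (Suc N) = mhs (a # \<alpha>) N + sum f ((Cons (Suc N)) ` idx (length \<alpha>) N)"
    unfolding mhs_eq_sum_prod_letter_term f_def idx_Suc_Suc length_Cons
    by (simp add: sum.union_disjoint finite_idx)
  also have "sum f ((Cons (Suc N)) ` idx (length \<alpha>) N) = letter_term a (Suc N) * mhs \<alpha> N"
    by (simp add: sum.reindex f_Cons mhs_eq_sum_prod_letter_term sum_distrib_left)
  finally show ?thesis .
qed

lemma mhs_Cons_eq_sum:
  "mhs (a # \<alpha>) N = (\<Sum>n<N. letter_term a (Suc n) * mhs \<alpha> n)"
  by (induction N) (simp_all add: mhs_Cons_0 mhs_Cons_Suc)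

inductive_set mhs_span :: "(nat \<Rightarrow> complex) set" where
  mhs_in_mhs_span: "mhs \<alpha> \<in> mhs_span"
| mhs_span_add: "f \<in> mhs_span \<Longrightarrow> g \<in> mhs_span \<Longrightarrow> (\<lambda>N. f N + g N) \<in> mhs_span"
| mhs_span_scale: "f \<in> mhs_span \<Longrightarrow> (\<lambda>N. c * f N) \<in> mhs_span"

lemma mhs_span_linear_image:
  assumes "f \<in> mhs_span"
    and "\<And>\<alpha>. L (mhs \<alpha>) \<in> mhs_span"
    and "\<And>f g. L (\<lambda>N. f N + g N) = (\<lambda>N. L f N + L g N)"
    and "\<And>c f. L (\<lambda>N. c * f N) = (\<lambda>N. c * L f N)"
  shows "L f \<in> mhs_span"
  using assms(1) by induction (simp_all add: assms(2-4) mhs_span.intros)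

lemma mhs_span_letter_sum_shifted:
  assumes "h \<in> mhs_span"
  shows "(\<lambda>N. \<Sum>n<N. letter_term a (Suc n) * h n) \<in> mhs_span"
proof (rule mhs_span_linear_image[OF assms])
  show "(\<lambda>N. \<Sum>n<N. letter_term a (Suc n) * mhs \<alpha> n) \<in> mhs_span" for \<alpha>
    unfolding mhs_Cons_eq_sum[symmetric] by (rule mhs_in_mhs_span)
qed (simp_all add: algebra_simps sum.distrib sum_distrib_left)

lemma mhs_mult_in_mhs_span: "(\<lambda>N. mhs \<alpha> N * mhs \<beta> N) \<in> mhs_span"
proof (induction "length \<alpha> + length \<beta>" arbitrary: \<alpha> \<beta> rule: less_induct)
  case less
  show ?case
  proof (cases \<alpha>; cases \<beta>)
    fix a \<alpha>' b \<beta>' assume \<alpha>: "\<alpha> = a # \<alpha>'" and \<beta>: "\<beta> = b # \<beta>'"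
    define X where "X = mhs \<alpha>"
    define Y where "Y = mhs \<beta>"
    define ab where "ab = (fst a + fst b, snd a * snd b)"
    have step: "X (Suc n) * Y (Suc n) - X n * Y n
        = letter_term a (Suc n) * (mhs \<alpha>' n * Y n)
        + letter_term b (Suc n) * (X n * mhs \<beta>' n)
        + letter_term ab (Suc n) * (mhs \<alpha>' n * mhs \<beta>' n)" for n
      unfolding X_def Y_def \<alpha> \<beta> mhs_Cons_Suc ab_def letter_term_mult[symmetric]
      by (simp add: algebra_simps)
    have "(\<lambda>N. X N * Y N) = (\<lambda>N. \<Sum>n<N. X (Suc n) * Y (Suc n) - X n * Y n)"
      using sum_lessThan_telescope[of "\<lambda>n. X n * Y n"] by (simp add: X_def \<alpha> mhs_Cons_0)
    also have "\<dots> = (\<lambda>N. (\<Sum>n<N. letter_term a (Suc n) * (mhs \<alpha>' n * Y n))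
        + (\<Sum>n<N. letter_term b (Suc n) * (X n * mhs \<beta>' n))
        + (\<Sum>n<N. letter_term ab (Suc n) * (mhs \<alpha>' n * mhs \<beta>' n)))"
      unfolding step by (simp add: sum.distrib)
    also have "\<dots> \<in> mhs_span"
      using less \<alpha> \<beta> unfolding X_def Y_def
      by (intro mhs_span_add mhs_span_letter_sum_shifted) simp_all
    finally show ?case unfolding X_def Y_def .
  qed (use mhs_in_mhs_span[of "[]"] in \<open>simp_all add: mhs_Nil mhs_in_mhs_span\<close>)
qed

lemma mhs_span_mult:
  assumes "f \<in> mhs_span" "g \<in> mhs_span"
  shows "(\<lambda>N. f N * g N) \<in> mhs_span"
proof (rule mhs_span_linear_image[OF assms(1), where L = "\<lambda>f N. f N * g N"])
  show "(\<lambda>N. mhs \<alpha> N * g N) \<in> mhs_span" for \<alpha>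
    by (rule mhs_span_linear_image[OF assms(2)]) (simp_all add: mhs_mult_in_mhs_span algebra_simps)
qed (simp_all add: algebra_simps)

lemma mhs_span_letter_sum:
  assumes "h \<in> mhs_span"
  shows "(\<lambda>N. \<Sum>n<N. letter_term a (Suc n) * h (Suc n)) \<in> mhs_span"
proof (rule mhs_span_linear_image[OF assms])
  fix \<gamma>
  show "(\<lambda>N. \<Sum>n<N. letter_term a (Suc n) * mhs \<gamma> (Suc n)) \<in> mhs_span"
  proof (cases \<gamma>)
    case Nil
    then show ?thesis
      using mhs_span_letter_sum_shifted[OF mhs_in_mhs_span[of "[]"], of a] by (simp add: mhs_Nil)
  next
    case (Cons b \<gamma>')
    define ab where "ab = (fst a + fst b, snd a * snd b)"
    have "(\<lambda>N. \<Sum>n<N. letter_term a (Suc n) * mhs \<gamma> (Suc n))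
        = (\<lambda>N. (\<Sum>n<N. letter_term a (Suc n) * mhs \<gamma> n)
             + (\<Sum>n<N. letter_term ab (Suc n) * mhs \<gamma>' n))"
      unfolding Cons mhs_Cons_Suc ab_def letter_term_mult[symmetric]
      by (simp add: algebra_simps sum.distrib)
    also have "\<dots> \<in> mhs_span"
      by (intro mhs_span_add mhs_span_letter_sum_shifted mhs_in_mhs_span)
    finally show ?thesis .
  qed
qed (simp_all add: algebra_simps sum.distrib sum_distrib_left)

(* The paper's space E_n. Only values at n > 0 matter: at n = 0 the constant 1 is not of
   the form letter_term a n * h n, because 0 powr r = 0. *)
inductive_set summand_span :: "(nat \<Rightarrow> complex) set" where
  letter_term_mult_in_summand_span:
    "h \<in> mhs_span \<Longrightarrow> (\<lambda>n. letter_term a n * h n) \<in> summand_span"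
| summand_span_add:
    "g1 \<in> summand_span \<Longrightarrow> g2 \<in> summand_span \<Longrightarrow> (\<lambda>n. g1 n + g2 n) \<in> summand_span"
| summand_span_cong:
    "g \<in> summand_span \<Longrightarrow> (\<And>n. 0 < n \<Longrightarrow> g' n = g n) \<Longrightarrow> g' \<in> summand_span"

lemma summand_span_image:
  assumes "g \<in> summand_span"
    and "\<And>a h. h \<in> mhs_span \<Longrightarrow> L (\<lambda>n. letter_term a n * h n) \<in> summand_span"
    and "\<And>g1 g2. L (\<lambda>n. g1 n + g2 n) = (\<lambda>n. L g1 n + L g2 n)"
    and "\<And>g g' n. (\<And>n. 0 < n \<Longrightarrow> g' n = g n) \<Longrightarrow> 0 < n \<Longrightarrow> L g' n = L g n"
  shows "L g \<in> summand_span"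
  using assms(1)
proof induction
  case (summand_span_cong g g')
  then show ?case by (blast intro: summand_span.summand_span_cong assms(4))
qed (simp_all add: assms(2,3) summand_span.summand_span_add)

lemma summand_span_mult:
  assumes "g1 \<in> summand_span" "g2 \<in> summand_span"
  shows "(\<lambda>n. g1 n * g2 n) \<in> summand_span"
proof (rule summand_span_image[OF assms(1), where L = "\<lambda>g n. g n * g2 n"])
  fix a h assume h: "h \<in> mhs_span"
  show "(\<lambda>n. letter_term a n * h n * g2 n) \<in> summand_span"
  proof (rule summand_span_image[OF assms(2), where L = "\<lambda>g n. letter_term a n * h n * g n"])
    fix b h' assume "h' \<in> mhs_span"
    then have "(\<lambda>n. letter_term (fst a + fst b, snd a * snd b) n * (h n * h' n)) \<in> summand_span"
      by (intro letter_term_mult_in_summand_span mhs_span_mult h)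
    then show "(\<lambda>n. letter_term a n * h n * (letter_term b n * h' n)) \<in> summand_span"
      by (simp add: letter_term_mult[symmetric] ac_simps)
  qed (simp_all add: algebra_simps)
qed (simp_all add: algebra_simps)

lemma summand_span_one: "(\<lambda>n. 1) \<in> summand_span"
  by (rule summand_span_cong[OF letter_term_mult_in_summand_span[OF mhs_in_mhs_span[of "[]"],
        of "(0, 1)"]]) (simp add: mhs_Nil letter_term_def)

lemma summand_span_zero: "(\<lambda>n. 0) \<in> summand_span"
  using letter_term_mult_in_summand_span[OF mhs_span_scale[OF mhs_in_mhs_span, of 0]] by simp

lemma summand_span_power: "g \<in> summand_span \<Longrightarrow> (\<lambda>n. g n ^ k) \<in> summand_span"
  by (induction k) (simp_all add: summand_span_one summand_span_mult)

lemma summand_span_sum: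
  "finite A \<Longrightarrow> (\<And>i. i \<in> A \<Longrightarrow> g i \<in> summand_span) \<Longrightarrow> (\<lambda>n. \<Sum>i\<in>A. g i n) \<in> summand_span"
  by (induction A rule: finite_induct) (simp_all add: summand_span_zero summand_span_add)

lemma summand_span_prod:
  "finite A \<Longrightarrow> (\<And>i. i \<in> A \<Longrightarrow> g i \<in> summand_span) \<Longrightarrow> (\<lambda>n. \<Prod>i\<in>A. g i n) \<in> summand_span"
  by (induction A rule: finite_induct) (simp_all add: summand_span_one summand_span_mult)

lemma exp_power_mhs_in_summand_span:
  "(\<lambda>n. c * z ^ n * of_nat n powr q * mhs \<alpha> n) \<in> summand_span"
  using letter_term_mult_in_summand_span[OF mhs_span_scale[OF mhs_in_mhs_span[of \<alpha>], of c], of "(-q, z)"]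
  by (simp add: letter_term_def powr_minus divide_inverse ac_simps)

lemma partial_sums_in_mhs_span:
  "g \<in> summand_span \<Longrightarrow> (\<lambda>N. \<Sum>n = 1..N. g n) \<in> mhs_span"
proof (induction rule: summand_span.induct)
  case (letter_term_mult_in_summand_span h a)
  then show ?case by (simp add: sum.atLeast1_atMost_eq mhs_span_letter_sum)
next
  case (summand_span_add g1 g2)
  then show ?case by (simp add: sum.distrib mhs_span_add)
next
  case (summand_span_cong g g')
  then have "(\<lambda>N. \<Sum>n = 1..N. g' n) = (\<lambda>N. \<Sum>n = 1..N. g n)"
    by (intro ext sum.cong) auto
  with summand_span_cong.IH show ?case by simp
qed

lemma mhs_span_finite_combination:
  assumes "f \<in> mhs_span"
  shows "\<exists>(K :: nat) d \<beta>. \<forall>N. f N = (\<Sum>k<K. d k * mhs (\<beta> k) N)"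
proof -
  have "\<exists>xs. \<forall>N. f N = (\<Sum>(c, \<beta>)\<leftarrow>xs. c * mhs \<beta> N)"
    using assms
  proof induction
    case (mhs_in_mhs_span \<alpha>)
    show ?case by (rule exI[of _ "[(1, \<alpha>)]"]) simp
  next
    case (mhs_span_add f g)
    then obtain xs ys where "\<forall>N. f N = (\<Sum>(c, \<beta>)\<leftarrow>xs. c * mhs \<beta> N)"
      and "\<forall>N. g N = (\<Sum>(c, \<beta>)\<leftarrow>ys. c * mhs \<beta> N)" by blast
    then show ?case by (intro exI[of _ "xs @ ys"]) simp
  next
    case (mhs_span_scale f c)
    then obtain xs where "\<forall>N. f N = (\<Sum>(c, \<beta>)\<leftarrow>xs. c * mhs \<beta> N)" by blast
    then show ?case
      by (intro exI[of _ "map (\<lambda>(d, \<beta>). (c * d, \<beta>)) xs"])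
        (simp add: sum_list_const_mult[symmetric] o_def case_prod_unfold ac_simps)
  qed
  then obtain xs where "\<forall>N. f N = (\<Sum>(c, \<beta>)\<leftarrow>xs. c * mhs \<beta> N)" by blast
  then have "\<forall>N. f N = (\<Sum>k<length xs. fst (xs ! k) * mhs (snd (xs ! k)) N)"
    by (simp add: sum_list_sum_nth atLeast0LessThan case_prod_unfold)
  then show ?thesis by (intro exI) assumption
qed

theorem theorem3p1:
  fixes m :: nat
    and F :: "nat \<Rightarrow> nat \<Rightarrow> complex"
    and M :: "nat \<Rightarrow> nat"
    and c z q :: "nat \<Rightarrow> nat \<Rightarrow> complex"
    and \<alpha> :: "nat \<Rightarrow> nat \<Rightarrow> word"
    and e :: "nat \<Rightarrow> nat"
  assumes "\<And>j n. j < m \<Longrightarrow> n \<ge> 1 \<Longrightarrow>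
      F j n = (\<Sum>l<M j. c j l * z j l ^ n * (of_nat n :: complex) powr (q j l) * mhs (\<alpha> j l) n)"
  shows "\<exists>K (d :: nat \<Rightarrow> complex) (\<beta> :: nat \<Rightarrow> word). \<forall>N \<ge> 1.
      (\<Sum>n = 1..N. \<Prod>j<m. F j n ^ e j) = (\<Sum>k<K. d k * mhs (\<beta> k) N)"
proof -
  have "F j \<in> summand_span" if "j < m" for j
  proof (rule summand_span_cong)
    show "(\<lambda>n. \<Sum>l<M j. c j l * z j l ^ n * of_nat n powr q j l * mhs (\<alpha> j l) n) \<in> summand_span"
      by (intro summand_span_sum exp_power_mhs_in_summand_span finite_lessThan)
  qed (simp add: assms that)
  then have "(\<lambda>n. \<Prod>j<m. F j n ^ e j) \<in> summand_span"
    by (intro summand_span_prod summand_span_power) auto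
  then have "(\<lambda>N. \<Sum>n = 1..N. \<Prod>j<m. F j n ^ e j) \<in> mhs_span"
    by (rule partial_sums_in_mhs_span)
  then show ?thesis by (blast dest: mhs_span_finite_combination)
qed

end
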